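(* Let the data $y\in\mathbb{R}^n$, $X\in\mathbb{R}^{n\times p}$, $Z\in\mathbb{R}^{n\times q}$ be fixed, with $Z^TZ$ and $X^TP_ZX$ non-singular, where $P_Z=Z(Z^TZ)^{-1}Z^T$. Let $X=U_X\Sigma_XV_X^T$, $Z=U_Z\Sigma_ZV_Z^T$ be thin singular value decompositions. Let $\delta\in(0,1)$, $\varepsilon\in(0,1/3]$, and let $\Pi\in\mathbb{R}^{m\times n}$ be a countsketch matrix with $m\ge\max\{q(q+1),2pq\}/(\varepsilon^2\delta)$. Suppose $\sigma_{\min}^2(U_Z^TU_X)\ge 16\varepsilon(1+\varepsilon)/(1-\varepsilon)$ and let $\sigma^*:=[\sigma_{\min}(X)\sigma_{\min}^2(U_Z^TU_X)]^{-1}$. Then with probability at least $1-\delta$, $$\|\widetilde\beta_{2SLS}-\widehat\beta_{2SLS}\|\le\frac{4\varepsilon}{1-\varepsilon}\left[2+3\frac{\|\widehat e\|}{\sqrt p}\right]\sigma^*.$$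
   Context: $\widehat\beta_{2SLS}=(X^TP_ZX)^{-1}X^TP_Zy$, $\widehat e=y-X\widehat\beta_{2SLS}$, and $\widetilde\beta_{2SLS}=(\widetilde X^TP_{\widetilde Z}\widetilde X)^{-1}\widetilde X^TP_{\widetilde Z}\widetilde y$ with $\widetilde X=\Pi X$, $\widetilde Z=\Pi Z$, $\widetilde y=\Pi y$. Countsketch: $\Pi$ has i.i.d. columns, each with exactly one nonzero entry, in a uniformly random row, equal to $\pm1$ with equal probability. $\sigma_{\min}$ denotes the smallest singular value. *)

theory Defs
  imports "HOL-Probability.Probability"
begin

definition proj :: "real^'q^'n \<Rightarrow> real^'n^'n" where
  "proj Z = Z ** matrix_inv (transpose Z ** Z) ** transpose Z"

definition tsls :: "real^'n \<Rightarrow> real^'p^'n \<Rightarrow> real^'q^'n \<Rightarrow> real^'p" where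
  "tsls y X Z = (matrix_inv (transpose X ** proj Z ** X) ** transpose X ** proj Z) *v y"

text \<open>Smallest singular value of A (with at least as many rows as columns):
  square root of the smallest eigenvalue of A^T A.\<close>
definition sigma_min :: "real^'c^'r \<Rightarrow> real" where
  "sigma_min A = sqrt (Min {l. \<exists>v. v \<noteq> 0 \<and> (transpose A ** A) *v v = l *\<^sub>R v})"

text \<open>Thin SVD with r = number of columns (full column rank case).\<close>
definition thin_svd :: "real^'c^'r \<Rightarrow> real^'c^'r \<Rightarrow> real^'c^'c \<Rightarrow> real^'c^'c \<Rightarrow> bool" where
  "thin_svd A U S V \<longleftrightarrow> transpose U ** U = mat 1 \<and> transpose V ** V = mat 1 \<and>
     (\<forall>i j. i \<noteq> j \<longrightarrow> S $ i $ j = 0) \<and> (\<forall>i. S $ i $ i \<ge> 0) \<and>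
     A = U ** S ** transpose V"

text \<open>Countsketch: for each column j, a row h j (uniform) and a sign s j (uniform), all independent.
  This is the uniform distribution on the finite set of such pairs of functions.\<close>
definition countsketch_pmf :: "('n::finite \<Rightarrow> 'm::finite \<times> bool) pmf" where
  "countsketch_pmf = pmf_of_set UNIV"

definition countsketch_matrix :: "('n::finite \<Rightarrow> 'm::finite \<times> bool) \<Rightarrow> real^'n^'m" where
  "countsketch_matrix \<omega> = (\<chi> i j. if fst (\<omega> j) = i then (if snd (\<omega> j) then 1 else -1) else 0)"

end

(*
  Write X = U_X T and Z = U_Z R with U_X, U_Z orthonormal and T, R invertible, and put
  D = Pi^T Pi - I.  For any sketch Pi the error d of the sketched estimator satisfies
  H (T d) = A^T G^-1 U_Z^T D e1 + U_X^T D e2, where G = I + U_Z^T D U_Z and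
  A = U_Z^T U_X + U_Z^T D U_X are the sketched Gram matrices, H = A^T G^-1 A, and e = e1 + e2
  splits the 2SLS residual along the column space of Z; the unsketched terms vanish by the normal
  equations.  If G and A are within 2 eps of I and U_Z^T U_X, then H is coercive with constant
  about s^2, s = sigma_min (U_Z^T U_X), which gives
  sigma_min X * norm d <= 4 (norm (U_Z^T D e1) + norm (U_X^T D e2)) / s^2.

  For a countsketch, D has the off-diagonal entries s_i s_j [h i = h j].  Flipping one sign shows
  that distinct entries are uncorrelated, and a collision has probability 1/m, so the bilinear
  form a^T D b has second moment at most 2 norm a^2 norm b^2 / m.  Markov's inequality then makes
  all four perturbations small at once with probability at least 1 - delta.
*)

theory Submission
  imports Defs
begin

section \<open>Matrix algebra and Frobenius norms\<close>

lemma matrix_inv_right: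
  assumes "invertible (A :: 'a::semiring_1^'n^'m)"
  shows "A ** matrix_inv A = mat 1"
  using someI_ex[of "\<lambda>B. A ** B = mat 1 \<and> B ** A = mat 1"] assms
  unfolding invertible_def matrix_inv_def by blast

lemma matrix_inv_left:
  assumes "invertible (A :: 'a::semiring_1^'n^'m)"
  shows "matrix_inv A ** A = mat 1"
  using someI_ex[of "\<lambda>B. A ** B = mat 1 \<and> B ** A = mat 1"] assms
  unfolding invertible_def matrix_inv_def by blast

lemma matrix_inv_unique:
  assumes "invertible (A :: 'a::semiring_1^'n^'m)" and "A ** B = mat 1"
  shows "matrix_inv A = B"
  by (metis assms matrix_inv_left matrix_mul_assoc matrix_mul_lid matrix_mul_rid)

lemma matrix_inv_mat_1 [simp]: "matrix_inv (mat 1 :: 'a::semiring_1^'n^'n) = mat 1"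
  by (rule matrix_inv_unique) (auto simp: invertible_def)

lemma matrix_inv_mult:
  fixes A B :: "real^'n^'n"
  assumes "invertible A" and "invertible B"
  shows "matrix_inv (A ** B) = matrix_inv B ** matrix_inv A"
proof (rule matrix_inv_unique)
  show "invertible (A ** B)"
    using assms by (rule invertible_mult)
  have "A ** B ** (matrix_inv B ** matrix_inv A) = A ** (B ** matrix_inv B) ** matrix_inv A"
    by (simp add: matrix_mul_assoc)
  then show "A ** B ** (matrix_inv B ** matrix_inv A) = mat 1"
    by (simp add: assms matrix_inv_right)
qed

lemma matrix_inv_transpose:
  fixes A :: "real^'n^'n"
  assumes "invertible A"
  shows "matrix_inv (transpose A) = transpose (matrix_inv A)"
  by (rule matrix_inv_unique[OF transpose_invertible[OF assms]])
    (metis assms matrix_inv_left matrix_transpose_mul transpose_mat)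

lemma invertible_iff_ker_zero:
  fixes A :: "real^'n^'n"
  shows "invertible A \<longleftrightarrow> (\<forall>x. A *v x = 0 \<longrightarrow> x = 0)"
  by (simp add: invertible_left_inverse matrix_left_invertible_ker)

lemma invertible_gram_imp_ker_zero:
  fixes M :: "real^'c^'r"
  assumes "invertible (transpose M ** M)" and "M *v x = 0"
  shows "x = 0"
  using assms by (simp add: invertible_iff_ker_zero flip: matrix_vector_mul_assoc)

lemma invertible_matrix_vector_cancel:
  fixes A :: "real^'n^'n"
  assumes "invertible A" and "A *v u = A *v w"
  shows "u = w"
  using assms by (metis invertible_iff_ker_zero matrix_vector_mult_diff_distrib right_minus_eq)

lemma card_le_if_matrix_injective:
  fixes B :: "real^'p^'q"
  assumes "\<And>x. B *v x = 0 \<Longrightarrow> x = 0"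
  shows "CARD('p) \<le> CARD('q)"
  using assms matrix_nonfull_linear_equations_eq[of B] rank_bound[of B] by auto

lemma matrix_add_rdistrib: "((A :: 'a::semiring_1^'n^'m) + B) ** C = A ** C + B ** C"
  by (vector matrix_matrix_mult_def sum.distrib[symmetric] distrib_right)

lemma inner_matrix_vector_mult:
  fixes M :: "real^'c^'r"
  shows "inner (M *v x) y = inner x (transpose M *v y)"
  by (metis dot_lmul_matrix inner_commute vector_transpose_matrix)

lemma inner_gram_eq_norm_sq:
  fixes M :: "real^'c^'r"
  shows "inner x ((transpose M ** M) *v x) = norm (M *v x)^2"
  by (metis inner_matrix_vector_mult inner_commute matrix_vector_mul_assoc power2_norm_eq_inner)

lemma norm_add_scaleR_sq:
  fixes x w :: "'a::real_inner"
  shows "norm (x + t *\<^sub>R w)^2 = norm x^2 + 2 * t * inner w x + t^2 * norm w^2"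
  unfolding power2_norm_eq_inner
  by (simp add: inner_add_left inner_add_right inner_commute algebra_simps power2_eq_square)

lemma norm_sq_vec: "norm (x :: real^'n)^2 = (\<Sum>i\<in>UNIV. (x $ i)^2)"
  by (simp add: norm_vec_def L2_set_def sum_nonneg)

lemma norm_sq_matrix: "norm (M :: real^'c^'r)^2 = (\<Sum>i\<in>UNIV. \<Sum>j\<in>UNIV. (M $ i $ j)^2)"
  by (simp add: norm_vec_def L2_set_def sum_nonneg norm_sq_vec)

lemma norm_sq_matrix_columns:
  "norm (M :: real^'c^'r)^2 = (\<Sum>j\<in>UNIV. norm (column j M)^2)"
  by (simp add: norm_sq_matrix norm_sq_vec column_def) (rule sum.swap)

lemma norm_transpose_matrix: "norm (transpose (M :: real^'c^'r)) = norm M"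
proof -
  have "norm (transpose M)^2 = norm M^2"
    by (simp add: norm_sq_matrix transpose_def) (rule sum.swap)
  then show ?thesis
    by (simp add: power2_eq_iff_nonneg)
qed

lemma norm_matrix_vector_le: "norm ((M :: real^'c^'r) *v x) \<le> norm M * norm x"
proof -
  have "norm (M *v x)^2 = (\<Sum>i\<in>UNIV. (inner (M $ i) x)^2)"
    by (simp add: norm_sq_vec matrix_vector_mul_component)
  also have "\<dots> \<le> (\<Sum>i\<in>UNIV. norm (M $ i)^2 * norm x^2)"
    by (intro sum_mono)
      (metis Cauchy_Schwarz_ineq2 abs_ge_zero power_mono power_mult_distrib power2_abs)
  also have "\<dots> = (norm M * norm x)^2"
    by (simp add: norm_vec_def L2_set_def sum_nonneg power_mult_distrib sum_distrib_right)
  finally show ?thesis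
    by (rule power2_le_imp_le) simp
qed

lemma norm_orthonormal_mult:
  fixes U :: "real^'c^'r"
  assumes "transpose U ** U = mat 1"
  shows "norm (U *v x) = norm x"
  using inner_gram_eq_norm_sq[of x U] assms by (simp add: dot_square_norm power2_eq_iff_nonneg)

lemma norm_orthonormal_transpose_mult_le:
  fixes U :: "real^'c^'r"
  assumes "transpose U ** U = mat 1"
  shows "norm (transpose U *v v) \<le> norm v"
proof -
  let ?z = "transpose U *v v"
  have "norm ?z^2 = inner (U *v ?z) v"
    by (simp add: inner_matrix_vector_mult power2_norm_eq_inner)
  also have "\<dots> \<le> norm ?z * norm v"
    using norm_cauchy_schwarz[of "U *v ?z" v] by (simp add: norm_orthonormal_mult[OF assms])
  finally have "norm ?z * norm ?z \<le> norm ?z * norm v"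
    by (simp add: power2_eq_square)
  then show ?thesis
    by (cases "?z = 0") (auto dest: mult_left_le_imp_le)
qed

lemma norm_sq_orthonormal:
  fixes U :: "real^'c^'r"
  assumes "transpose U ** U = mat 1"
  shows "norm U^2 = real CARD('c)"
proof -
  have "norm (column j U)^2 = 1" for j
    using assms matrix_mult_transpose_dot_column[of U]
    by (simp add: power2_norm_eq_inner vec_eq_iff mat_def)
  then show ?thesis
    by (simp add: norm_sq_matrix_columns)
qed

lemma bilinear_matrix_entry:
  fixes M :: "real^'c^'n" and D :: "real^'n^'n" and N :: "real^'d^'n"
  shows "(transpose M ** D ** N) $ r $ k = inner (column r M) (D *v column k N)"
  by (simp add: matrix_matrix_mult_def matrix_vector_mult_def transpose_def column_def inner_vec_def
      sum_distrib_left sum_distrib_right mult_ac) (rule sum.swap)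

lemma bilinear_vector_entry:
  fixes M :: "real^'c^'n" and D :: "real^'n^'n"
  shows "(transpose M *v (D *v v)) $ r = inner (column r M) (D *v v)"
  by (simp add: matrix_vector_mult_def transpose_def column_def inner_vec_def
      sum_distrib_left mult_ac)

section \<open>The smallest singular value\<close>

lemma symmetric_eigenvectors_orthogonal:
  fixes A :: "real^'n^'n"
  assumes "transpose A = A" and "A *v v = l *\<^sub>R v" and "A *v w = l' *\<^sub>R w" and "l \<noteq> l'"
  shows "inner v w = 0"
proof -
  have "l * inner v w = inner (A *v v) w"
    using assms(2) by simp
  also have "\<dots> = inner v (A *v w)"
    using assms(1) by (simp add: inner_matrix_vector_mult)
  also have "\<dots> = l' * inner v w"
    using assms(3) by simp
  finally show ?thesis
    using assms(4) by simp
qed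

lemma symmetric_eigenvalues_finite:
  fixes A :: "real^'n^'n"
  assumes sym: "transpose A = A"
  shows "finite {l. \<exists>v. v \<noteq> 0 \<and> A *v v = l *\<^sub>R v}"
proof -
  define L where "L = {l. \<exists>v. v \<noteq> 0 \<and> A *v v = l *\<^sub>R v}"
  define ev where "ev l = (SOME v. v \<noteq> 0 \<and> A *v v = l *\<^sub>R v)" for l
  have ev: "ev l \<noteq> 0" "A *v ev l = l *\<^sub>R ev l" if "l \<in> L" for l
    using someI_ex[of "\<lambda>v. v \<noteq> 0 \<and> A *v v = l *\<^sub>R v"] that
    unfolding ev_def L_def by auto
  have orth: "inner (ev l) (ev l') = 0" if "l \<in> L" "l' \<in> L" "l \<noteq> l'" for l l'
    using symmetric_eigenvectors_orthogonal[OF sym ev(2) ev(2)] that by blast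
  have "inj_on ev L"
    by (rule inj_onI) (metis orth ev(1) inner_eq_zero_iff)
  moreover have "pairwise orthogonal (ev ` L)"
    unfolding pairwise_def orthogonal_def using orth by fastforce
  moreover have "0 \<notin> ev ` L"
    using ev(1) by (metis imageE)
  ultimately have "finite (ev ` L)"
    using pairwise_orthogonal_independent independent_bound by blast
  then show ?thesis
    using \<open>inj_on ev L\<close> finite_imageD unfolding L_def by blast
qed

lemma linear_coeff_zero_if_quadratic_nonneg:
  fixes a b :: real
  assumes "\<And>t. 0 \<le> 2 * t * a + t^2 * b"
  shows "a = 0"
proof -
  define s where "s = 1 / (\<bar>b\<bar> + 1)"
  have s: "0 < s" "s * b - 2 < 0"
    unfolding s_def by (auto simp: field_simps)
  have "0 \<le> 2 * (- s * a) * a + (- s * a)^2 * b" by (rule assms)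
  also have "\<dots> = (s * a^2) * (s * b - 2)"
    by (simp add: power2_eq_square algebra_simps)
  finally have "s * a^2 \<le> 0"
    using s(2) by (simp add: zero_le_mult_iff)
  then show ?thesis
    using s(1) by (simp add: mult_le_0_iff)
qed

lemma symmetric_rayleigh_minimiser_eigenvector:
  fixes A :: "real^'n^'n" and x :: "real^'n"
  defines "\<mu> \<equiv> inner x (A *v x)"
  assumes sym: "transpose A = A" and x: "norm x = 1"
    and ray: "\<And>y. \<mu> * norm y^2 \<le> inner y (A *v y)"
  shows "A *v x = \<mu> *\<^sub>R x"
proof -
  have sym': "inner u (A *v v) = inner v (A *v u)" for u v
    by (metis inner_commute inner_matrix_vector_mult sym)
  define w where "w = A *v x - \<mu> *\<^sub>R x"
  have "0 \<le> 2 * t * inner w w + t^2 * (inner w (A *v w) - \<mu> * norm w^2)" for t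
  proof -
    have "inner (x + t *\<^sub>R w) (A *v (x + t *\<^sub>R w))
        = \<mu> + 2 * t * inner w (A *v x) + t^2 * inner w (A *v w)"
      by (simp add: \<mu>_def matrix_vector_right_distrib matrix_vector_mult_scaleR
          inner_add_left inner_add_right sym'[of x w] power2_eq_square algebra_simps)
    moreover have "norm (x + t *\<^sub>R w)^2 = 1 + 2 * t * inner w x + t^2 * norm w^2"
      using x by (simp add: norm_add_scaleR_sq)
    ultimately have le: "\<mu> * (1 + 2 * t * inner w x + t^2 * norm w^2)
        \<le> \<mu> + 2 * t * inner w (A *v x) + t^2 * inner w (A *v w)"
      using ray[of "x + t *\<^sub>R w"] by simp
    have ww: "inner w w = inner w (A *v x) - \<mu> * inner w x"
      by (simp add: w_def inner_diff_right)
    have "2 * t * inner w w + t^2 * (inner w (A *v w) - \<mu> * norm w^2)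
        = (\<mu> + 2 * t * inner w (A *v x) + t^2 * inner w (A *v w))
          - \<mu> * (1 + 2 * t * inner w x + t^2 * norm w^2)"
      unfolding ww by (simp add: algebra_simps)
    then show ?thesis
      using le by linarith
  qed
  then have "inner w w = 0"
    by (rule linear_coeff_zero_if_quadratic_nonneg)
  then show ?thesis
    by (simp add: w_def)
qed

lemma symmetric_rayleigh_minimum:
  fixes A :: "real^'n^'n"
  assumes sym: "transpose A = A"
  shows "\<exists>x. norm x = 1 \<and> A *v x = inner x (A *v x) *\<^sub>R x \<and>
    (\<forall>y. inner x (A *v x) * norm y^2 \<le> inner y (A *v y))"
proof -
  have "continuous_on (sphere 0 1) (\<lambda>x. inner x (A *v x))"
    by (intro continuous_intros linear_continuous_on matrix_vector_mul_bounded_linear)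
  moreover have "sphere (0::real^'n) 1 \<noteq> {}"
    by simp
  ultimately obtain x where x_sphere: "x \<in> sphere (0::real^'n) 1"
    and min: "\<And>y. y \<in> sphere 0 1 \<Longrightarrow> inner x (A *v x) \<le> inner y (A *v y)"
    using continuous_attains_inf[OF compact_sphere] by blast
  then have x: "norm x = 1"
    by simp
  have ray: "inner x (A *v x) * norm y^2 \<le> inner y (A *v y)" for y
  proof (cases "y = 0")
    case False
    have "inner x (A *v x) \<le> inner (y /\<^sub>R norm y) (A *v (y /\<^sub>R norm y))"
      using False min[of "y /\<^sub>R norm y"] by simp
    also have "\<dots> = inner y (A *v y) / norm y^2"
      by (simp add: matrix_vector_mult_scaleR power2_eq_square divide_inverse)
    finally show ?thesis
      using False by (simp add: pos_le_divide_eq)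
  qed simp
  then show ?thesis
    using x symmetric_rayleigh_minimiser_eigenvector[OF sym x ray] by (intro exI[of _ x]) simp
qed

(* The Min in sigma_min_def is meaningful: the eigenvalue set of the Gram matrix is finite and
   contains its Rayleigh minimum. *)
lemma sigma_min_attained:
  fixes M :: "real^'c^'r"
  shows "\<exists>v. norm v = 1 \<and> norm (M *v v) = sigma_min M \<and>
    (\<forall>x. sigma_min M * norm x \<le> norm (M *v x))"
proof -
  let ?B = "transpose M ** M"
  have sym: "transpose ?B = ?B"
    by (simp add: matrix_transpose_mul)
  obtain v where v: "norm v = 1" "?B *v v = inner v (?B *v v) *\<^sub>R v"
    and ray: "\<forall>y. inner v (?B *v v) * norm y^2 \<le> inner y (?B *v y)"
    using symmetric_rayleigh_minimum[OF sym] by auto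
  define \<mu> where "\<mu> = norm (M *v v)^2"
  have eig: "?B *v v = \<mu> *\<^sub>R v"
    using v(2) by (simp add: \<mu>_def inner_gram_eq_norm_sq)
  have ray': "\<mu> * norm y^2 \<le> norm (M *v y)^2" for y
    using ray by (simp add: \<mu>_def inner_gram_eq_norm_sq)
  define L where "L = {l. \<exists>u. u \<noteq> 0 \<and> ?B *v u = l *\<^sub>R u}"
  have "v \<noteq> 0"
    using v(1) by auto
  then have "\<mu> \<in> L"
    unfolding L_def mem_Collect_eq by (intro exI[of _ v] conjI eig)
  moreover have "\<mu> \<le> l" if "l \<in> L" for l
  proof -
    from that obtain u where u: "u \<noteq> 0" "?B *v u = l *\<^sub>R u"
      unfolding L_def mem_Collect_eq by (elim exE conjE)
    have "\<mu> * norm u^2 \<le> l * norm u^2"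
      using ray'[of u] inner_gram_eq_norm_sq[of u M] u(2) by (simp add: dot_square_norm)
    then show ?thesis
      using u(1) by simp
  qed
  moreover have "finite L"
    unfolding L_def by (rule symmetric_eigenvalues_finite[OF sym])
  ultimately have "Min L = \<mu>"
    by (intro Min_eqI) simp_all
  then have sv: "sigma_min M = norm (M *v v)"
    unfolding sigma_min_def L_def[symmetric] \<mu>_def by simp
  have "sigma_min M * norm x \<le> norm (M *v x)" for x
  proof (rule power2_le_imp_le)
    show "(sigma_min M * norm x)^2 \<le> norm (M *v x)^2"
      using ray'[of x] by (simp add: sv \<mu>_def power_mult_distrib)
  qed simp
  then show ?thesis
    using v(1) sv by auto
qed

lemma sigma_min_nonneg: "0 \<le> sigma_min (M :: real^'c^'r)"
  using sigma_min_attained[of M] norm_ge_zero by metis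

lemma sigma_min_mult_norm_le: "sigma_min (M :: real^'c^'r) * norm x \<le> norm (M *v x)"
  using sigma_min_attained[of M] by blast

lemma sigma_min_pos:
  fixes M :: "real^'c^'r"
  assumes "\<And>x. M *v x = 0 \<Longrightarrow> x = 0"
  shows "0 < sigma_min M"
proof -
  obtain v where v: "norm v = 1" "norm (M *v v) = sigma_min M"
    using sigma_min_attained[of M] by blast
  have "v \<noteq> 0"
    using v(1) by auto
  then have "0 < norm (M *v v)"
    using assms by auto
  with v(2) show ?thesis
    by simp
qed

lemma sigma_min_orthonormal_product_le_1:
  fixes W :: "real^'q^'n" and U :: "real^'p^'n"
  assumes "transpose W ** W = mat 1" and "transpose U ** U = mat 1"
  shows "sigma_min (transpose W ** U) \<le> 1"
proof -
  fix i :: 'p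
  have "sigma_min (transpose W ** U) * norm (axis i 1 :: real^'p)
      \<le> norm (transpose W *v (U *v axis i 1))"
    using sigma_min_mult_norm_le[of "transpose W ** U" "axis i 1"]
    by (simp add: matrix_vector_mul_assoc)
  also have "\<dots> \<le> norm (U *v axis i 1)"
    by (rule norm_orthonormal_transpose_mult_le[OF assms(1)])
  finally show ?thesis
    by (simp add: norm_orthonormal_mult[OF assms(2)])
qed

section \<open>Second moments of a countsketch\<close>

type_synonym ('n, 'm) countsketch_seed = "'n \<Rightarrow> 'm \<times> bool"

definition countsketch_sign :: "('n, 'm) countsketch_seed \<Rightarrow> 'n \<Rightarrow> real" where
  "countsketch_sign \<omega> j = (if snd (\<omega> j) then 1 else -1)"

definition countsketch_collision :: "('n::finite, 'm) countsketch_seed \<Rightarrow> real^'n^'n" where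
  "countsketch_collision \<omega> = (\<chi> i j. if i \<noteq> j \<and> fst (\<omega> i) = fst (\<omega> j)
     then countsketch_sign \<omega> i * countsketch_sign \<omega> j else 0)"

lemma countsketch_matrix_entry:
  "countsketch_matrix \<omega> $ k $ j = (if fst (\<omega> j) = k then countsketch_sign \<omega> j else 0)"
  by (simp add: countsketch_matrix_def countsketch_sign_def)

lemma countsketch_gram:
  fixes \<omega> :: "('n::finite, 'm::finite) countsketch_seed"
  shows "transpose (countsketch_matrix \<omega>) ** countsketch_matrix \<omega> = mat 1 + countsketch_collision \<omega>"
proof -
  have "(\<Sum>k\<in>UNIV. (if fst (\<omega> i) = k then countsketch_sign \<omega> i else 0) *
          (if fst (\<omega> j) = k then countsketch_sign \<omega> j else 0))
      = (if i = j then 1 else 0) + (if i \<noteq> j \<and> fst (\<omega> i) = fst (\<omega> j)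
          then countsketch_sign \<omega> i * countsketch_sign \<omega> j else 0)" for i j
  proof -
    have "(\<Sum>k\<in>UNIV. (if fst (\<omega> i) = k then countsketch_sign \<omega> i else 0) *
          (if fst (\<omega> j) = k then countsketch_sign \<omega> j else 0))
        = (if fst (\<omega> j) = fst (\<omega> i) then countsketch_sign \<omega> i * countsketch_sign \<omega> j else 0)"
      by (simp add: if_distrib[of "\<lambda>x. x * _"] cong: if_cong)
    then show ?thesis
      by (cases "i = j") (auto simp: countsketch_sign_def)
  qed
  then show ?thesis
    by (simp add: vec_eq_iff matrix_matrix_mult_def transpose_def countsketch_matrix_entry
        countsketch_collision_def mat_def)
qed

definition flip_sign :: "'n \<Rightarrow> ('n, 'm) countsketch_seed \<Rightarrow> ('n, 'm) countsketch_seed" where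
  "flip_sign t \<omega> = fun_upd \<omega> t (fst (\<omega> t), \<not> snd (\<omega> t))"

lemma sum_eq_zero_if_odd_under_flip_sign:
  fixes f :: "('n::finite, 'm::finite) countsketch_seed \<Rightarrow> real"
  assumes "\<And>\<omega>. f (flip_sign t \<omega>) = - f \<omega>"
  shows "(\<Sum>\<omega>\<in>UNIV. f \<omega>) = 0"
proof -
  have "(\<Sum>\<omega>\<in>UNIV. f \<omega>) = (\<Sum>\<omega>\<in>UNIV. f (flip_sign t \<omega>))"
    by (rule sum.reindex_bij_witness[of _ "flip_sign t" "flip_sign t"]) (auto simp: flip_sign_def)
  then show ?thesis
    by (simp add: assms sum_negf)
qed

lemma fst_flip_sign [simp]: "fst (flip_sign t \<omega> i) = fst (\<omega> i)"
  by (simp add: flip_sign_def)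

lemma countsketch_sign_flip_sign:
  "countsketch_sign (flip_sign t \<omega>) i =
    (if i = t then - countsketch_sign \<omega> i else countsketch_sign \<omega> i)"
  by (simp add: flip_sign_def countsketch_sign_def)

lemma countsketch_collision_flip_sign:
  "countsketch_collision (flip_sign t \<omega>) $ i $ j =
    (if t = i \<or> t = j then - countsketch_collision \<omega> $ i $ j else countsketch_collision \<omega> $ i $ j)"
  by (cases "t = i"; cases "t = j")
    (simp_all add: countsketch_collision_def countsketch_sign_flip_sign)

lemma sum_split_coordinate:
  fixes F :: "('n::finite \<Rightarrow> 'c::finite) \<Rightarrow> real"
  shows "(\<Sum>\<omega>\<in>UNIV. F \<omega>) = (\<Sum>\<omega>0\<in>{\<omega>. \<omega> j = c0}. \<Sum>c\<in>UNIV. F (\<omega>0(j := c)))"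
proof -
  have "(\<Sum>\<omega>\<in>UNIV. F \<omega>) = (\<Sum>p\<in>{\<omega>. \<omega> j = c0} \<times> UNIV. F ((fst p)(j := snd p)))"
    by (rule sum.reindex_bij_witness[of _ "\<lambda>p. (fst p)(j := snd p)" "\<lambda>\<omega>. (fun_upd \<omega> j c0, \<omega> j)"])
      auto
  also have "\<dots> = (\<Sum>\<omega>0\<in>{\<omega>. \<omega> j = c0}. \<Sum>c\<in>UNIV. F (\<omega>0(j := c)))"
    by (simp add: sum.cartesian_product split_def)
  finally show ?thesis .
qed

lemma sum_collision_indicator:
  fixes i j :: "'n::finite"
  assumes "i \<noteq> j"
  shows "(\<Sum>\<omega> \<in> (UNIV :: ('n, 'm::finite) countsketch_seed set).
      if fst (\<omega> i) = fst (\<omega> j) then 1 else 0 :: real) = CARD(('n, 'm) countsketch_seed) / CARD('m)"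
proof -
  fix c0 :: "'m \<times> bool"
  define B where "B = {\<omega> :: ('n, 'm) countsketch_seed. \<omega> j = c0}"
  have card_prod: "CARD('m \<times> bool) = CARD('m) * 2"
    by (metis UNIV_Times_UNIV card_UNIV_bool card_cartesian_product)
  have two: "(\<Sum>c \<in> (UNIV :: ('m \<times> bool) set). if r = fst c then 1 else 0 :: real) = 2" for r
  proof -
    have "(\<Sum>c \<in> (UNIV :: ('m \<times> bool) set). if r = fst c then 1 else 0 :: real)
        = (\<Sum>c\<in>{(r, True), (r, False)}. 1)"
      by (rule sum.mono_neutral_cong_right) auto
    then show ?thesis
      by simp
  qed
  have "(\<Sum>\<omega> \<in> (UNIV :: ('n, 'm) countsketch_seed set).
      if fst (\<omega> i) = fst (\<omega> j) then 1 else 0 :: real)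
      = (\<Sum>\<omega>0\<in>B. \<Sum>c \<in> (UNIV :: ('m \<times> bool) set). if fst (\<omega>0 i) = fst c then 1 else 0)"
    unfolding B_def using assms
    by (subst sum_split_coordinate[of _ j c0]) (intro sum.cong refl, auto)
  also have "\<dots> = 2 * card B"
    by (simp only: two sum_constant of_nat_numeral)
  finally have "(\<Sum>\<omega> \<in> (UNIV :: ('n, 'm) countsketch_seed set).
      if fst (\<omega> i) = fst (\<omega> j) then 1 else 0 :: real) = 2 * card B" .
  moreover have "real CARD(('n, 'm) countsketch_seed) = real (card B) * (real CARD('m) * 2)"
    using sum_split_coordinate[of "\<lambda>_. 1" j c0] card_prod by (simp add: B_def)
  ultimately show ?thesis
    by simp
qed

(* Unless the two index pairs agree up to order, flipping the sign of an index that occurs in only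
   one of them negates the summand. *)
lemma sum_collision_products:
  fixes i j k l :: "'n::finite"
  shows "(\<Sum>\<omega> \<in> (UNIV :: ('n, 'm::finite) countsketch_seed set).
      countsketch_collision \<omega> $ i $ j * countsketch_collision \<omega> $ k $ l)
    = CARD(('n, 'm) countsketch_seed) / CARD('m) *
      (if i \<noteq> j \<and> (k = i \<and> l = j \<or> k = j \<and> l = i) then 1 else 0)"
proof (cases "i \<noteq> j \<and> (k = i \<and> l = j \<or> k = j \<and> l = i)")
  case True
  then have "countsketch_collision \<omega> $ i $ j * countsketch_collision \<omega> $ k $ l
      = (if fst (\<omega> i) = fst (\<omega> j) then 1 else 0)" for \<omega> :: "('n, 'm) countsketch_seed"
    by (auto simp: countsketch_collision_def countsketch_sign_def)
  then show ?thesis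
    using True sum_collision_indicator[of i j] by simp
next
  case not_paired: False
  show ?thesis
  proof (cases "i = j \<or> k = l")
    case True
    then show ?thesis
      by (auto simp: countsketch_collision_def)
  next
    case False
    define t where "t = (if i \<noteq> k \<and> i \<noteq> l then i else j)"
    have t: "t = i \<or> t = j" "t \<noteq> k" "t \<noteq> l"
      using not_paired False unfolding t_def by auto
    have "(\<Sum>\<omega> \<in> (UNIV :: ('n, 'm) countsketch_seed set).
        countsketch_collision \<omega> $ i $ j * countsketch_collision \<omega> $ k $ l) = 0"
      by (rule sum_eq_zero_if_odd_under_flip_sign[of _ t])
        (use t in \<open>auto simp: countsketch_collision_flip_sign\<close>)
    then show ?thesis
      using not_paired by simp
  qed
qed

lemma sum_pairs:
  fixes g :: "'a::finite \<times> 'b::finite \<Rightarrow> real"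
  shows "(\<Sum>p\<in>UNIV. g p) = (\<Sum>i\<in>UNIV. \<Sum>j\<in>UNIV. g (i, j))"
  unfolding sum.cartesian_product UNIV_Times_UNIV by (simp add: split_def)

lemma sum_swap_pairs:
  fixes g :: "'a::finite \<times> 'a \<Rightarrow> real"
  shows "(\<Sum>p\<in>UNIV. g (prod.swap p)) = (\<Sum>p\<in>UNIV. g p)"
  by (rule sum.reindex_bij_witness[of _ prod.swap prod.swap]) auto

lemma inner_collision_as_pair_sum:
  "inner a (countsketch_collision \<omega> *v b)
    = (\<Sum>p\<in>UNIV. a $ fst p * b $ snd p * countsketch_collision \<omega> $ fst p $ snd p)"
  by (simp add: sum_pairs inner_vec_def matrix_vector_mult_def sum_distrib_left mult_ac)

lemma sum_sq_collision_form:
  fixes c :: "'n::finite \<times> 'n \<Rightarrow> real"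
  shows "(\<Sum>\<omega> \<in> (UNIV :: ('n, 'm::finite) countsketch_seed set).
      (\<Sum>p\<in>UNIV. c p * countsketch_collision \<omega> $ fst p $ snd p)^2)
    = CARD(('n, 'm) countsketch_seed) / CARD('m) *
      (\<Sum>p\<in>UNIV. if fst p \<noteq> snd p then c p * (c p + c (prod.swap p)) else 0)"
proof -
  let ?\<Omega> = "UNIV :: ('n, 'm) countsketch_seed set"
  define \<nu> where "\<nu> = CARD(('n, 'm) countsketch_seed) / CARD('m)"
  define D where "D \<omega> p = countsketch_collision \<omega> $ fst p $ snd p"
    for \<omega> :: "('n, 'm) countsketch_seed" and p :: "'n \<times> 'n"
  have ED: "(\<Sum>\<omega>\<in>?\<Omega>. D \<omega> p * D \<omega> q)
      = \<nu> * (if fst p \<noteq> snd p \<and> (q = p \<or> q = prod.swap p) then 1 else 0)" for p q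
    using sum_collision_products[of "fst p" "snd p" "fst q" "snd q"]
    by (simp add: D_def \<nu>_def prod_eq_iff)
  have pair: "(\<Sum>q\<in>UNIV. c p * c q *
        (\<nu> * (if fst p \<noteq> snd p \<and> (q = p \<or> q = prod.swap p) then 1 else 0)))
      = \<nu> * (if fst p \<noteq> snd p then c p * (c p + c (prod.swap p)) else 0)" for p
  proof (cases "fst p = snd p")
    case False
    then have "p \<noteq> prod.swap p"
      by (metis fst_swap swap_swap prod.collapse snd_swap)
    then have "(\<Sum>q\<in>UNIV. c p * c q *
          (\<nu> * (if fst p \<noteq> snd p \<and> (q = p \<or> q = prod.swap p) then 1 else 0)))
        = (\<Sum>q\<in>UNIV. (if q = p then \<nu> * (c p * c q) else 0)
            + (if q = prod.swap p then \<nu> * (c p * c q) else 0))"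
      using False by (intro sum.cong) auto
    also have "\<dots> = \<nu> * (c p * c p) + \<nu> * (c p * c (prod.swap p))"
      by (simp add: sum.distrib)
    finally show ?thesis
      using False by (simp add: algebra_simps)
  qed simp
  have "(\<Sum>\<omega>\<in>?\<Omega>. (\<Sum>p\<in>UNIV. c p * D \<omega> p)^2)
      = (\<Sum>\<omega>\<in>?\<Omega>. \<Sum>p\<in>UNIV. \<Sum>q\<in>UNIV. c p * c q * (D \<omega> p * D \<omega> q))"
    by (simp add: power2_eq_square sum_product mult_ac)
  also have "\<dots> = (\<Sum>p\<in>UNIV. \<Sum>q\<in>UNIV. c p * c q * (\<Sum>\<omega>\<in>?\<Omega>. D \<omega> p * D \<omega> q))"
    by (subst sum.swap, rule sum.cong[OF refl], subst sum.swap) (simp add: sum_distrib_left)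
  also have "\<dots> = \<nu> * (\<Sum>p\<in>UNIV. if fst p \<noteq> snd p then c p * (c p + c (prod.swap p)) else 0)"
    by (simp add: ED pair sum_distrib_left)
  finally show ?thesis
    by (simp add: D_def \<nu>_def)
qed

lemma sum_sq_inner_collision_le:
  fixes a b :: "real^'n::finite"
  shows "(\<Sum>\<omega> \<in> (UNIV :: ('n, 'm::finite) countsketch_seed set).
      inner a (countsketch_collision \<omega> *v b)^2)
    \<le> 2 * (CARD(('n, 'm) countsketch_seed) / CARD('m)) * norm a^2 * norm b^2"
proof -
  define \<nu> where "\<nu> = CARD(('n, 'm) countsketch_seed) / CARD('m)"
  define c where "c p = a $ fst p * b $ snd p" for p :: "'n \<times> 'n"
  have "(\<Sum>\<omega> \<in> (UNIV :: ('n, 'm) countsketch_seed set). inner a (countsketch_collision \<omega> *v b)^2)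
      = \<nu> * (\<Sum>p\<in>UNIV. if fst p \<noteq> snd p then c p * (c p + c (prod.swap p)) else 0)"
    using sum_sq_collision_form[of c, where 'm = 'm]
    by (simp add: inner_collision_as_pair_sum c_def \<nu>_def)
  also have "\<dots> \<le> \<nu> * (\<Sum>p\<in>UNIV. c p^2 + (c p^2 + c (prod.swap p)^2) / 2)"
  proof (rule mult_left_mono[OF sum_mono])
    fix p
    have "c p * c (prod.swap p) \<le> (c p^2 + c (prod.swap p)^2) / 2"
      using sum_squares_bound[of "c p" "c (prod.swap p)"] by simp
    then show "(if fst p \<noteq> snd p then c p * (c p + c (prod.swap p)) else 0)
        \<le> c p^2 + (c p^2 + c (prod.swap p)^2) / 2"
      by (auto simp: power2_eq_square distrib_left)
  qed (simp add: \<nu>_def)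
  also have "\<dots> = 2 * \<nu> * (\<Sum>p\<in>UNIV. c p^2)"
    by (simp add: sum.distrib sum_divide_distrib[symmetric] sum_swap_pairs[of "\<lambda>p. c p^2"])
  also have "(\<Sum>p\<in>UNIV. c p^2) = norm a^2 * norm b^2"
    by (simp add: sum_pairs c_def norm_sq_vec sum_product power_mult_distrib)
  finally show ?thesis
    by (simp add: \<nu>_def mult.assoc)
qed

lemma sum_norm_sq_collision_matrix_le:
  fixes M :: "real^'c^'n::finite" and N :: "real^'d^'n"
  shows "(\<Sum>\<omega> \<in> (UNIV :: ('n, 'm::finite) countsketch_seed set).
      norm (transpose M ** countsketch_collision \<omega> ** N)^2)
    \<le> 2 * (CARD(('n, 'm) countsketch_seed) / CARD('m)) * norm M^2 * norm N^2"
proof -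
  let ?\<Omega> = "UNIV :: ('n, 'm) countsketch_seed set"
  define \<nu> where "\<nu> = CARD(('n, 'm) countsketch_seed) / CARD('m)"
  have "(\<Sum>\<omega>\<in>?\<Omega>. norm (transpose M ** countsketch_collision \<omega> ** N)^2)
      = (\<Sum>r\<in>UNIV. \<Sum>k\<in>UNIV. \<Sum>\<omega>\<in>?\<Omega>.
          inner (column r M) (countsketch_collision \<omega> *v column k N)^2)"
    by (simp add: norm_sq_matrix bilinear_matrix_entry)
      (subst sum.swap, rule sum.cong[OF refl], rule sum.swap)
  also have "\<dots> \<le> (\<Sum>r\<in>UNIV. \<Sum>k\<in>UNIV. 2 * \<nu> * norm (column r M)^2 * norm (column k N)^2)"
    unfolding \<nu>_def by (intro sum_mono sum_sq_inner_collision_le)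
  also have "\<dots> = 2 * \<nu> * norm M^2 * norm N^2"
    by (simp add: norm_sq_matrix_columns[of M] norm_sq_matrix_columns[of N] sum_product
        sum_distrib_left mult_ac)
  finally show ?thesis
    unfolding \<nu>_def .
qed

lemma sum_norm_sq_collision_vector_le:
  fixes M :: "real^'c^'n::finite" and v :: "real^'n"
  shows "(\<Sum>\<omega> \<in> (UNIV :: ('n, 'm::finite) countsketch_seed set).
      norm (transpose M *v (countsketch_collision \<omega> *v v))^2)
    \<le> 2 * (CARD(('n, 'm) countsketch_seed) / CARD('m)) * norm M^2 * norm v^2"
proof -
  let ?\<Omega> = "UNIV :: ('n, 'm) countsketch_seed set"
  define \<nu> where "\<nu> = CARD(('n, 'm) countsketch_seed) / CARD('m)"
  have "(\<Sum>\<omega>\<in>?\<Omega>. norm (transpose M *v (countsketch_collision \<omega> *v v))^2)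
      = (\<Sum>r\<in>UNIV. \<Sum>\<omega>\<in>?\<Omega>. inner (column r M) (countsketch_collision \<omega> *v v)^2)"
    by (simp only: norm_sq_vec bilinear_vector_entry) (rule sum.swap)
  also have "\<dots> \<le> (\<Sum>r\<in>UNIV. 2 * \<nu> * norm (column r M)^2 * norm v^2)"
    unfolding \<nu>_def by (intro sum_mono sum_sq_inner_collision_le)
  also have "\<dots> = 2 * \<nu> * norm M^2 * norm v^2"
    by (simp add: norm_sq_matrix_columns[of M] sum_distrib_left sum_distrib_right mult_ac)
  finally show ?thesis
    unfolding \<nu>_def .
qed

lemma sum_norm_sq_collision_orthonormal_le:
  fixes W :: "real^'q::finite^'n::finite" and U :: "real^'p::finite^'n"
  assumes "transpose W ** W = mat 1" and "transpose U ** U = mat 1"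
  shows "(\<Sum>\<omega> \<in> (UNIV :: ('n, 'm::finite) countsketch_seed set).
      norm (transpose W ** countsketch_collision \<omega> ** W)^2
      + norm (transpose W ** countsketch_collision \<omega> ** U)^2)
    \<le> 2 * (CARD(('n, 'm) countsketch_seed) / CARD('m))
      * (CARD('q) * CARD('q) + CARD('q) * CARD('p))"
  using sum_norm_sq_collision_matrix_le[of W W, where 'm = 'm]
    sum_norm_sq_collision_matrix_le[of W U, where 'm = 'm]
  by (simp add: sum.distrib norm_sq_orthonormal assms algebra_simps)

lemma sum_norm_sq_collision_residual_le:
  fixes W :: "real^'q::finite^'n::finite" and U :: "real^'p::finite^'n"
  assumes "transpose W ** W = mat 1" and "transpose U ** U = mat 1" and "CARD('p) \<le> CARD('q)"
  shows "(\<Sum>\<omega> \<in> (UNIV :: ('n, 'm::finite) countsketch_seed set).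
      norm (transpose W *v (countsketch_collision \<omega> *v r1))^2
      + norm (transpose U *v (countsketch_collision \<omega> *v r2))^2)
    \<le> 2 * (CARD(('n, 'm) countsketch_seed) / CARD('m)) * CARD('q) * (norm r1^2 + norm r2^2)"
proof -
  define \<nu> where "\<nu> = real CARD(('n, 'm) countsketch_seed) / CARD('m)"
  have S3: "(\<Sum>\<omega> \<in> (UNIV :: ('n, 'm) countsketch_seed set).
      norm (transpose W *v (countsketch_collision \<omega> *v r1))^2) \<le> 2 * \<nu> * CARD('q) * norm r1^2"
    using sum_norm_sq_collision_vector_le[of W r1, where 'm = 'm]
    unfolding norm_sq_orthonormal[OF assms(1)] \<nu>_def .
  have S5: "(\<Sum>\<omega> \<in> (UNIV :: ('n, 'm) countsketch_seed set).
      norm (transpose U *v (countsketch_collision \<omega> *v r2))^2) \<le> 2 * \<nu> * CARD('p) * norm r2^2"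
    using sum_norm_sq_collision_vector_le[of U r2, where 'm = 'm]
    unfolding norm_sq_orthonormal[OF assms(2)] \<nu>_def .
  have "2 * \<nu> * CARD('p) * norm r2^2 \<le> 2 * \<nu> * CARD('q) * norm r2^2"
    using assms(3) by (intro mult_right_mono mult_left_mono) (simp_all add: \<nu>_def)
  moreover have "2 * \<nu> * CARD('q) * (norm r1^2 + norm r2^2)
      = 2 * \<nu> * CARD('q) * norm r1^2 + 2 * \<nu> * CARD('q) * norm r2^2"
    by (simp add: algebra_simps)
  ultimately show ?thesis
    using S3 S5 unfolding sum.distrib \<nu>_def[symmetric] by linarith
qed

section \<open>Perturbed weighted normal equations\<close>

lemma perturbed_identity_norm_bounds:
  fixes G :: "real^'n^'n"
  assumes "norm (G - mat 1) \<le> g"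
  shows "(1 - g) * norm v \<le> norm (G *v v)" and "norm (G *v v) \<le> (1 + g) * norm v"
proof -
  define w where "w = (G - mat 1) *v v"
  have Gv: "G *v v = v + w"
    by (simp add: w_def matrix_vector_mult_diff_rdistrib)
  have w: "norm w \<le> g * norm v"
    using norm_matrix_vector_le[of "G - mat 1" v] mult_right_mono[OF assms norm_ge_zero[of v]]
    unfolding w_def by linarith
  show "(1 - g) * norm v \<le> norm (G *v v)"
    unfolding Gv left_diff_distrib using norm_diff_ineq[of v w] w by simp
  show "norm (G *v v) \<le> (1 + g) * norm v"
    unfolding Gv distrib_right using norm_triangle_ineq[of v w] w by simp
qed

lemma perturbed_identity_inverse:
  fixes G :: "real^'n^'n"
  assumes G: "norm (G - mat 1) \<le> g" and g: "g < 1"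
  shows "invertible G"
    and "norm (matrix_inv G *v u) \<le> norm u / (1 - g)"
    and "(1 - g) / (1 + g)^2 * norm u^2 \<le> inner u (matrix_inv G *v u)"
proof -
  have g0: "0 \<le> g"
    using G norm_ge_zero order_trans by blast
  note low = perturbed_identity_norm_bounds(1)[OF G]
    and up = perturbed_identity_norm_bounds(2)[OF G]
  show inv: "invertible G"
    unfolding invertible_iff_ker_zero
    using low g by (metis mult_le_0_iff norm_le_zero_iff norm_zero not_le diff_gt_0_iff_gt)
  define v where "v = matrix_inv G *v u"
  have u: "u = G *v v"
    by (simp add: v_def matrix_vector_mul_assoc matrix_inv_right[OF inv])
  have "(1 - g) * norm v \<le> norm u"
    using low[of v] by (simp add: u)
  then show "norm (matrix_inv G *v u) \<le> norm u / (1 - g)"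
    using g by (simp add: v_def[symmetric] pos_le_divide_eq mult.commute)
  have "inner u v = norm v^2 + inner ((G - mat 1) *v v) v"
    by (simp add: u matrix_vector_mult_diff_rdistrib inner_diff_left power2_norm_eq_inner)
  moreover have "\<bar>inner ((G - mat 1) *v v) v\<bar> \<le> g * norm v^2"
  proof -
    have "norm ((G - mat 1) *v v) \<le> g * norm v"
      using norm_matrix_vector_le[of "G - mat 1" v] mult_right_mono[OF G norm_ge_zero[of v]]
      by linarith
    then have "norm ((G - mat 1) *v v) * norm v \<le> g * norm v * norm v"
      by (simp add: mult_right_mono)
    then show ?thesis
      using Cauchy_Schwarz_ineq2[of "(G - mat 1) *v v" v] by (simp add: power2_eq_square mult.assoc)
  qed
  ultimately have lower: "(1 - g) * norm v^2 \<le> inner u v"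
    by (simp add: algebra_simps abs_le_iff)
  have "norm u^2 \<le> (1 + g)^2 * norm v^2"
    using up[of v] g0 by (simp add: u power_mult_distrib[symmetric] power_mono)
  then have "(1 - g) / (1 + g)^2 * norm u^2 \<le> (1 - g) / (1 + g)^2 * ((1 + g)^2 * norm v^2)"
    by (rule mult_left_mono) (use g in simp)
  also have "\<dots> = (1 - g) * norm v^2"
    using g0 by simp
  finally show "(1 - g) / (1 + g)^2 * norm u^2 \<le> inner u (matrix_inv G *v u)"
    using lower unfolding v_def by linarith
qed

lemma coercive_matrix_bounds:
  fixes H :: "real^'n^'n"
  assumes "0 < k" and "\<And>x. k * norm x^2 \<le> inner x (H *v x)"
  shows "invertible H" and "norm x \<le> norm (H *v x) / k"
proof -
  have "k * norm x \<le> norm (H *v x)" for x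
  proof (cases "x = 0")
    case False
    have "k * norm x^2 \<le> norm x * norm (H *v x)"
      using assms(2)[of x] Cauchy_Schwarz_ineq2[of x "H *v x"] by linarith
    then have "norm x * (k * norm x) \<le> norm x * norm (H *v x)"
      by (simp add: power2_eq_square mult_ac)
    then show ?thesis
      using False by simp
  qed simp
  then have bound: "norm x \<le> norm (H *v x) / k" for x
    using assms(1) by (simp add: pos_le_divide_eq mult.commute)
  then show "norm x \<le> norm (H *v x) / k" .
  show "invertible H"
    unfolding invertible_iff_ker_zero using bound by (metis div_0 norm_le_zero_iff norm_zero)
qed

lemma perturbed_matrix_norm_bounds:
  fixes A A0 :: "real^'c^'r"
  assumes "norm (A - A0) \<le> a"
  shows "norm (A0 *v x) - a * norm x \<le> norm (A *v x)"
    and "norm (transpose A *v w) \<le> norm (transpose A0 *v w) + a * norm w"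
proof -
  have "norm ((A - A0) *v x) \<le> a * norm x"
    using norm_matrix_vector_le[of "A - A0" x] mult_right_mono[OF assms norm_ge_zero[of x]]
    by linarith
  then show "norm (A0 *v x) - a * norm x \<le> norm (A *v x)"
    using norm_triangle_ineq[of "A *v x" "(A0 - A) *v x"] norm_minus_commute[of A A0]
    by (simp add: matrix_vector_mult_diff_rdistrib norm_minus_commute[of "A *v x"])
  have "norm (transpose (A - A0) *v w) \<le> a * norm w"
    using norm_matrix_vector_le[of "transpose (A - A0)" w]
      mult_right_mono[OF assms norm_ge_zero[of w]]
    unfolding norm_transpose_matrix by linarith
  moreover have "transpose A *v w = transpose A0 *v w + transpose (A - A0) *v w"
    by (simp add: transpose_def matrix_vector_mult_def vec_eq_iff sum_subtractf algebra_simps)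
  ultimately show "norm (transpose A *v w) \<le> norm (transpose A0 *v w) + a * norm w"
    using norm_triangle_ineq[of "transpose A0 *v w" "transpose (A - A0) *v w"] by simp
qed

lemma perturbed_weighted_gram_bounds:
  fixes G :: "real^'q^'q" and A A0 :: "real^'p^'q"
  assumes G: "norm (G - mat 1) \<le> g" and g: "g < 1"
    and A: "norm (A - A0) \<le> a" and as: "a < s"
    and A0_low: "\<And>x. s * norm x \<le> norm (A0 *v x)"
    and A0_up: "\<And>w. norm (transpose A0 *v w) \<le> norm w"
  shows "invertible (transpose A ** matrix_inv G ** A)"
    and "norm x \<le> (1 + g)^2 / ((1 - g) * (s - a)^2)
      * norm ((transpose A ** matrix_inv G ** A) *v x)"
    and "norm (transpose A *v (matrix_inv G *v d)) \<le> (1 + a) / (1 - g) * norm d"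
proof -
  have g0: "0 \<le> g" and a0: "0 \<le> a"
    using G A norm_ge_zero order_trans by blast+
  define H where "H = transpose A ** matrix_inv G ** A"
  define k where "k = (1 - g) / (1 + g)^2 * (s - a)^2"
  have k: "0 < k"
    unfolding k_def using g g0 as by simp
  have "k * norm x^2 \<le> inner x (H *v x)" for x
  proof -
    have "(s - a) * norm x \<le> norm (A *v x)"
      using perturbed_matrix_norm_bounds(1)[OF A, of x] A0_low[of x]
      by (simp add: left_diff_distrib)
    then have "(s - a)^2 * norm x^2 \<le> norm (A *v x)^2"
      using as by (metis power_mono power_mult_distrib mult_nonneg_nonneg diff_ge_0_iff_ge
          less_imp_le norm_ge_zero)
    then have "k * norm x^2 \<le> (1 - g) / (1 + g)^2 * norm (A *v x)^2"
      unfolding k_def mult.assoc by (rule mult_left_mono) (use g in simp)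
    also have "\<dots> \<le> inner (A *v x) (matrix_inv G *v (A *v x))"
      by (rule perturbed_identity_inverse(3)[OF G g])
    also have "\<dots> = inner x (H *v x)"
      by (simp add: H_def inner_matrix_vector_mult matrix_vector_mul_assoc matrix_mul_assoc)
    finally show ?thesis .
  qed
  note coercive = coercive_matrix_bounds[OF k this]
  show "invertible (transpose A ** matrix_inv G ** A)"
    using coercive(1) unfolding H_def .
  show "norm x \<le> (1 + g)^2 / ((1 - g) * (s - a)^2) * norm ((transpose A ** matrix_inv G ** A) *v x)"
    using coercive(2)[of x] unfolding H_def k_def by (simp add: mult.commute)
  have "norm (transpose A *v (matrix_inv G *v d)) \<le> (1 + a) * norm (matrix_inv G *v d)"
    using perturbed_matrix_norm_bounds(2)[OF A, of "matrix_inv G *v d"]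
      A0_up[of "matrix_inv G *v d"]
    unfolding distrib_right by linarith
  also have "\<dots> \<le> (1 + a) * (norm d / (1 - g))"
    by (rule mult_left_mono[OF perturbed_identity_inverse(2)[OF G g]]) (use a0 in simp)
  finally show "norm (transpose A *v (matrix_inv G *v d)) \<le> (1 + a) / (1 - g) * norm d"
    by simp
qed

lemma perturbation_constant_le:
  fixes \<epsilon> s :: real
  assumes e0: "0 < \<epsilon>" and es: "16 * \<epsilon> \<le> s^2" and s0: "0 < s" and s1: "s \<le> 1"
  shows "(1 + 2 * \<epsilon>)^2 / ((1 - 2 * \<epsilon>) * (s - 2 * \<epsilon>)^2) * ((1 + 2 * \<epsilon>) / (1 - 2 * \<epsilon>))
    \<le> 4 / s^2"
proof -
  have "s^2 \<le> s"
    using s0 s1 by (simp add: power2_eq_square mult_le_cancel_left1)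
  then have e16: "\<epsilon> \<le> 1/16" and e2s: "2 * \<epsilon> \<le> s / 8"
    using es s1 by linarith+
  have num: "(1 + 2 * \<epsilon>)^3 \<le> (9/8)^3"
    by (rule power_mono) (use e16 e0 in auto)
  have "(7/8)^2 * ((7/8) * s)^2 \<le> (1 - 2 * \<epsilon>)^2 * (s - 2 * \<epsilon>)^2"
    by (intro mult_mono power_mono) (use e16 e2s s0 in auto)
  moreover have "0 < (7/8)^2 * ((7/8) * s)^2"
    using s0 by simp
  ultimately have "(1 + 2 * \<epsilon>)^3 / ((1 - 2 * \<epsilon>)^2 * (s - 2 * \<epsilon>)^2)
      \<le> (9/8)^3 / ((7/8)^2 * ((7/8) * s)^2)"
    by (intro frac_le num) simp_all
  also have "\<dots> \<le> 4 / s^2"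
    using s0 by (simp add: field_simps power2_eq_square)
  finally show ?thesis
    using e16 by (simp add: power2_eq_square power3_eq_cube field_simps)
qed

lemma small_perturbation_weighted_gram:
  fixes G :: "real^'q^'q" and A A0 :: "real^'p^'q"
  assumes G: "norm (G - mat 1) \<le> 2 * \<epsilon>" and A: "norm (A - A0) \<le> 2 * \<epsilon>"
    and e0: "0 < \<epsilon>" and es: "16 * \<epsilon> \<le> s^2" and s0: "0 < s" and s1: "s \<le> 1"
    and A0_low: "\<And>x. s * norm x \<le> norm (A0 *v x)"
    and A0_up: "\<And>w. norm (transpose A0 *v w) \<le> norm w"
  shows "invertible G" and "invertible (transpose A ** matrix_inv G ** A)"
    and "(transpose A ** matrix_inv G ** A) *v x = transpose A *v (matrix_inv G *v d) + f
      \<Longrightarrow> norm x \<le> 4 / s^2 * (norm d + norm f)"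
proof -
  have "2 * \<epsilon> \<le> s^2 / 8" and "s^2 \<le> s"
    using es s0 s1 by (simp_all add: power2_eq_square mult_le_cancel_left1)
  then have g1: "2 * \<epsilon> < 1" and as: "2 * \<epsilon> < s"
    using s0 s1 by linarith+
  show "invertible G"
    by (rule perturbed_identity_inverse(1)[OF G g1])
  note bounds = perturbed_weighted_gram_bounds[OF G g1 A as A0_low A0_up]
  show "invertible (transpose A ** matrix_inv G ** A)"
    by (rule bounds(1))
  assume eq: "(transpose A ** matrix_inv G ** A) *v x = transpose A *v (matrix_inv G *v d) + f"
  define \<kappa> where "\<kappa> = (1 + 2 * \<epsilon>)^2 / ((1 - 2 * \<epsilon>) * (s - 2 * \<epsilon>)^2)"
  define q where "q = (1 + 2 * \<epsilon>) / (1 - 2 * \<epsilon>)"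
  have \<kappa>0: "0 \<le> \<kappa>" and q1: "1 \<le> q"
    using e0 g1 by (simp_all add: \<kappa>_def q_def)
  have "norm x \<le> \<kappa> * norm (transpose A *v (matrix_inv G *v d) + f)"
    using bounds(2)[of x] unfolding eq \<kappa>_def .
  also have "\<dots> \<le> \<kappa> * (q * norm d + 1 * norm f)"
    using bounds(3)[of d] norm_triangle_ineq[of "transpose A *v (matrix_inv G *v d)" f]
    by (intro mult_left_mono \<kappa>0) (auto simp: q_def)
  also have "\<dots> \<le> \<kappa> * (q * (norm d + norm f))"
    using mult_right_mono[OF q1 norm_ge_zero[of f]]
    by (intro mult_left_mono \<kappa>0) (simp add: distrib_left)
  also have "\<dots> \<le> 4 / s^2 * (norm d + norm f)"
    using perturbation_constant_le[OF e0 es s0 s1] unfolding \<kappa>_def q_def mult.assoc[symmetric]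
    by (rule mult_right_mono) simp
  finally show "norm x \<le> 4 / s^2 * (norm d + norm f)" .
qed

section \<open>Sketched two-stage least squares\<close>

lemma sketched_gram:
  fixes P :: "real^'n^'m" and M :: "real^'c^'n" and N :: "real^'d^'n"
  assumes "transpose P ** P = mat 1 + E"
  shows "transpose (P ** M) ** (P ** N) = transpose M ** N + transpose M ** E ** N"
proof -
  have "transpose (P ** M) ** (P ** N) = transpose M ** (transpose P ** P) ** N"
    by (simp add: matrix_transpose_mul matrix_mul_assoc)
  then show ?thesis
    by (simp add: assms matrix_add_ldistrib matrix_add_rdistrib)
qed

lemma sketched_gram_vector:
  fixes P :: "real^'n^'m" and M :: "real^'c^'n"
  assumes "transpose P ** P = mat 1 + E"
  shows "transpose (P ** M) *v (P *v v) = transpose M *v v + transpose M *v (E *v v)"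
proof -
  have "transpose (P ** M) *v (P *v v) = (transpose M ** (transpose P ** P)) *v v"
    by (simp add: matrix_transpose_mul matrix_mul_assoc matrix_vector_mul_assoc)
  then show ?thesis
    by (simp add: assms matrix_add_ldistrib matrix_vector_mult_add_rdistrib matrix_vector_mul_assoc)
qed

lemma proj_mult_invertible:
  fixes M :: "real^'q^'n" and R :: "real^'q^'q"
  assumes iG: "invertible (transpose M ** M)" and iR: "invertible R"
  shows "proj (M ** R) = proj M"
proof -
  define Ri where "Ri = matrix_inv R"
  have RRi: "R ** Ri = mat 1" and tRiR: "transpose Ri ** transpose R = mat 1"
    unfolding Ri_def using matrix_inv_right[OF iR] matrix_inv_left[OF iR]
    by (auto simp flip: matrix_transpose_mul)
  have "transpose (M ** R) ** (M ** R) = transpose R ** (transpose M ** M ** R)"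
    by (simp add: matrix_transpose_mul matrix_mul_assoc)
  then have "matrix_inv (transpose (M ** R) ** (M ** R))
      = Ri ** matrix_inv (transpose M ** M) ** transpose Ri"
    by (simp only: matrix_inv_mult[OF transpose_invertible[OF iR] invertible_mult[OF iG iR]]
        matrix_inv_mult[OF iG iR] matrix_inv_transpose[OF iR] Ri_def)
  then have "proj (M ** R)
      = M ** (R ** Ri) ** matrix_inv (transpose M ** M) ** (transpose Ri ** transpose R)
        ** transpose M"
    by (simp add: proj_def matrix_transpose_mul matrix_mul_assoc)
  then show ?thesis
    by (simp add: RRi tRiR proj_def)
qed

lemma proj_orthonormal:
  assumes "transpose U ** U = mat 1"
  shows "proj U = U ** transpose U"
  by (simp add: proj_def assms)

lemma thin_svd_factor:
  assumes "thin_svd A U S V" and "\<forall>x. A *v x = 0 \<longrightarrow> x = 0"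
  shows "transpose U ** U = mat 1" and "A = U ** (S ** transpose V)"
    and "invertible (S ** transpose V)"
proof -
  show "transpose U ** U = mat 1" and A: "A = U ** (S ** transpose V)"
    using assms(1) by (simp_all add: thin_svd_def matrix_mul_assoc)
  show "invertible (S ** transpose V)"
    unfolding invertible_iff_ker_zero
    using assms(2) by (metis A matrix_vector_mul_assoc matrix_vector_mult_0_right)
qed

lemma tsls_residual_equation:
  assumes "invertible (transpose X ** proj Z ** X)"
  shows "(transpose X ** proj Z ** X) *v (tsls y X Z - b) = (transpose X ** proj Z) *v (y - X *v b)"
proof -
  let ?K = "transpose X ** proj Z ** X"
  have "?K *v tsls y X Z = (?K ** matrix_inv ?K) *v ((transpose X ** proj Z) *v y)"
    by (simp add: tsls_def matrix_vector_mul_assoc matrix_mul_assoc)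
  then show ?thesis
    by (simp add: matrix_inv_right[OF assms] matrix_vector_mult_diff_distrib
        matrix_vector_mul_assoc)
qed

lemma tsls_normal_equation:
  fixes U :: "real^'p^'n" and T :: "real^'p^'p" and W :: "real^'q^'n"
  assumes XT: "X = U ** T" and iT: "invertible T" and PZ: "proj Z = W ** transpose W"
    and iK: "invertible (transpose X ** proj Z ** X)"
  shows "transpose U *v (W *v (transpose W *v (y - X *v tsls y X Z))) = 0"
proof -
  have "(transpose X ** proj Z) *v (y - X *v tsls y X Z) = 0"
    using tsls_residual_equation[OF iK, of y "tsls y X Z"] by simp
  moreover have "transpose X ** proj Z = transpose T ** transpose U ** W ** transpose W"
    by (simp add: XT PZ matrix_transpose_mul matrix_mul_assoc)
  ultimately have
    "transpose T *v (transpose U *v (W *v (transpose W *v (y - X *v tsls y X Z)))) = 0"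
    by (simp only: matrix_vector_mul_assoc matrix_mul_assoc)
  then show ?thesis
    using transpose_invertible[OF iT] invertible_iff_ker_zero by blast
qed

lemma sketched_tsls_error_identity:
  fixes P :: "real^'n^'m" and U :: "real^'p^'n" and T :: "real^'p^'p"
    and W :: "real^'q^'n" and R :: "real^'q^'q"
  defines "G \<equiv> transpose (P ** W) ** (P ** W)" and "A \<equiv> transpose (P ** W) ** (P ** U)"
  assumes XT: "X = U ** T" and ZR: "Z = W ** R" and iT: "invertible T" and iR: "invertible R"
    and iG: "invertible G" and iH: "invertible (transpose A ** matrix_inv G ** A)"
    and res: "y - X *v b = r + W *v c"
  shows "invertible (transpose (P ** Z) ** (P ** Z))"
    and "invertible (transpose (P ** X) ** proj (P ** Z) ** (P ** X))"
    and "(transpose A ** matrix_inv G ** A) *v (T *v (tsls (P *v y) (P ** X) (P ** Z) - b))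
      = transpose A *v (matrix_inv G *v (transpose (P ** W) *v (P *v r)))
        + transpose (P ** U) *v (P *v (W *v c))"
proof -
  let ?H = "transpose A ** matrix_inv G ** A"
  let ?F = "transpose A ** matrix_inv G ** transpose (P ** W)"
  have PZ: "P ** Z = (P ** W) ** R" and PX: "P ** X = (P ** U) ** T"
    by (simp_all add: XT ZR matrix_mul_assoc)
  have "transpose (P ** Z) ** (P ** Z) = transpose R ** G ** R"
    by (simp add: PZ G_def matrix_transpose_mul matrix_mul_assoc)
  then show "invertible (transpose (P ** Z) ** (P ** Z))"
    using iG iR by (simp add: invertible_mult transpose_invertible)
  have "proj (P ** Z) = (P ** W) ** matrix_inv G ** transpose (P ** W)"
    using proj_mult_invertible[OF iG[unfolded G_def] iR] unfolding PZ G_def proj_def .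
  then have XP: "transpose (P ** X) ** proj (P ** Z) = transpose T ** ?F"
    by (simp add: PX A_def matrix_transpose_mul matrix_mul_assoc)
  have K: "transpose (P ** X) ** proj (P ** Z) ** (P ** X) = transpose T ** ?H ** T"
    unfolding XP by (simp add: PX A_def matrix_mul_assoc)
  show iK: "invertible (transpose (P ** X) ** proj (P ** Z) ** (P ** X))"
    unfolding K using iT iH by (simp add: invertible_mult transpose_invertible)
  have Gc: "transpose (P ** W) *v (P *v (W *v c)) = G *v c"
    by (simp add: G_def matrix_vector_mul_assoc)
  have Ac: "transpose A *v c = transpose (P ** U) *v (P *v (W *v c))"
    by (simp add: A_def matrix_transpose_mul matrix_vector_mul_assoc)
  have diff: "P *v y - (P ** X) *v b = P *v (y - X *v b)"
    by (simp add: matrix_vector_mult_diff_distrib matrix_vector_mul_assoc)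
  have "(transpose T ** ?H ** T) *v (tsls (P *v y) (P ** X) (P ** Z) - b)
      = (transpose T ** ?F) *v (P *v (y - X *v b))"
    using tsls_residual_equation[OF iK, of "P *v y" b] unfolding K unfolding XP diff .
  then have "transpose T *v (?H *v (T *v (tsls (P *v y) (P ** X) (P ** Z) - b)))
      = transpose T *v (?F *v (P *v (y - X *v b)))"
    by (simp add: matrix_vector_mul_assoc matrix_mul_assoc)
  also have "?F *v (P *v (y - X *v b))
      = transpose A *v (matrix_inv G *v (transpose (P ** W) *v (P *v r) + G *v c))"
    by (simp add: res Gc[symmetric] matrix_vector_right_distrib flip: matrix_vector_mul_assoc)
  also have "\<dots> = transpose A *v (matrix_inv G *v (transpose (P ** W) *v (P *v r)))
      + transpose A *v c"
    by (simp add: matrix_vector_right_distrib matrix_vector_mul_assoc matrix_inv_left[OF iG])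
  finally show "?H *v (T *v (tsls (P *v y) (P ** X) (P ** Z) - b))
      = transpose A *v (matrix_inv G *v (transpose (P ** W) *v (P *v r)))
        + transpose (P ** U) *v (P *v (W *v c))"
    unfolding Ac by (rule invertible_matrix_vector_cancel[OF transpose_invertible[OF iT]])
qed

lemma sketched_tsls_error_bound:
  fixes P :: "real^'n^'m" and U :: "real^'p^'n" and T :: "real^'p^'p"
    and W :: "real^'q^'n" and R :: "real^'q^'q" and E :: "real^'n^'n"
    and y :: "real^'n" and X :: "real^'p^'n" and Z :: "real^'q^'n" and b :: "real^'p"
  defines "e \<equiv> y - X *v b"
  defines "e2 \<equiv> W *v (transpose W *v e)"
  assumes XT: "X = U ** T" and ZR: "Z = W ** R" and iT: "invertible T" and iR: "invertible R"
    and UU: "transpose U ** U = mat 1" and WW: "transpose W ** W = mat 1"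
    and PP: "transpose P ** P = mat 1 + E"
    and normal: "transpose U *v e2 = 0"
    and e0: "0 < \<epsilon>" and es: "16 * \<epsilon> \<le> s^2" and s0: "0 < s" and s1: "s \<le> 1"
    and s_low: "\<And>x. s * norm x \<le> norm ((transpose W ** U) *v x)"
    and \<sigma>0: "0 < \<sigma>" and \<sigma>_low: "\<And>x. \<sigma> * norm x \<le> norm (X *v x)"
    and EW: "norm (transpose W ** E ** W) \<le> 2 * \<epsilon>"
    and EU: "norm (transpose W ** E ** U) \<le> 2 * \<epsilon>"
  shows "invertible (transpose (P ** Z) ** (P ** Z)) \<and>
    invertible (transpose (P ** X) ** proj (P ** Z) ** (P ** X)) \<and>
    norm (tsls (P *v y) (P ** X) (P ** Z) - b)
      \<le> 4 / (\<sigma> * s^2) * (norm (transpose W *v (E *v (e - e2))) + norm (transpose U *v (E *v e2)))"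
proof -
  define G where "G = transpose (P ** W) ** (P ** W)"
  define A where "A = transpose (P ** W) ** (P ** U)"
  define d where "d = tsls (P *v y) (P ** X) (P ** Z) - b"
  define d3 where "d3 = transpose W *v (E *v (e - e2))"
  define d5 where "d5 = transpose U *v (E *v e2)"
  have G: "norm (G - mat 1) \<le> 2 * \<epsilon>"
    using EW by (simp add: G_def sketched_gram[OF PP] WW)
  have A: "norm (A - transpose W ** U) \<le> 2 * \<epsilon>"
    using EU by (simp add: A_def sketched_gram[OF PP])
  have A0_up: "norm (transpose (transpose W ** U) *v w) \<le> norm w" for w
    using norm_orthonormal_transpose_mult_le[OF UU, of "W *v w"] norm_orthonormal_mult[OF WW, of w]
    by (simp add: matrix_transpose_mul matrix_vector_mul_assoc)
  note small = small_perturbation_weighted_gram[OF G A e0 es s0 s1 s_low A0_up]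
  note identity = sketched_tsls_error_identity[OF XT ZR iT iR
      small(1)[unfolded G_def] small(2)[unfolded G_def A_def],
      of y b "e - e2" "transpose W *v e", folded G_def A_def]
  have res: "y - X *v b = (e - e2) + W *v (transpose W *v e)"
    by (simp add: e_def e2_def)
  have "transpose W *v (e - e2) = 0"
    by (simp add: e2_def matrix_vector_mult_diff_distrib matrix_vector_mul_assoc WW)
  then have "transpose (P ** W) *v (P *v (e - e2)) = d3"
    by (simp only: sketched_gram_vector[OF PP] d3_def add_0_left)
  moreover have "transpose (P ** U) *v (P *v (W *v (transpose W *v e))) = d5"
    by (simp only: e2_def[symmetric] sketched_gram_vector[OF PP] normal d5_def add_0_left)
  ultimately have "(transpose A ** matrix_inv G ** A) *v (T *v d)
      = transpose A *v (matrix_inv G *v d3) + d5"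
    using identity(3)[OF res] by (simp add: d_def)
  then have "norm (T *v d) \<le> 4 / s^2 * (norm d3 + norm d5)"
    by (rule small(3))
  moreover have "\<sigma> * norm d \<le> norm (T *v d)"
    using \<sigma>_low[of d] by (simp add: XT norm_orthonormal_mult[OF UU] flip: matrix_vector_mul_assoc)
  ultimately have "\<sigma> * norm d \<le> 4 / s^2 * (norm d3 + norm d5)"
    by linarith
  then have "norm d \<le> 4 / s^2 * (norm d3 + norm d5) / \<sigma>"
    using \<sigma>0 by (simp only: pos_le_divide_eq mult.commute)
  then have "norm d \<le> 4 / (\<sigma> * s^2) * (norm d3 + norm d5)"
    by (simp add: mult.commute)
  then show ?thesis
    using identity(1,2)[OF res] by (simp add: d_def d3_def d5_def)
qed

section \<open>Probability of a small distortion\<close>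

lemma markov_card_less:
  fixes f :: "'a::finite \<Rightarrow> real"
  assumes nonneg: "\<And>x. 0 \<le> f x" and "0 < c"
  shows "real CARD('a) - (\<Sum>x\<in>UNIV. f x) / c \<le> real (card {x. f x < c})"
proof -
  let ?B = "{x. \<not> f x < c}"
  have "c * real (card ?B) = (\<Sum>x\<in>?B. c)"
    by simp
  also have "\<dots> \<le> (\<Sum>x\<in>?B. f x)"
    by (rule sum_mono) simp
  also have "\<dots> \<le> (\<Sum>x\<in>UNIV. f x)"
    by (rule sum_mono2) (use nonneg in auto)
  finally have "real (card ?B) \<le> (\<Sum>x\<in>UNIV. f x) / c"
    using \<open>0 < c\<close> by (simp add: pos_le_divide_eq mult.commute)
  moreover have "card {x. f x < c} + card ?B = CARD('a)"
    by (subst card_Un_disjoint[symmetric]) (auto intro: arg_cong[where f = card])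
  ultimately show ?thesis
    by linarith
qed

(* Markov's inequality is applied once, to this combined statistic, instead of to the four
   perturbation terms separately. *)
definition sketch_distortion ::
    "real \<Rightarrow> real^'q^'n \<Rightarrow> real^'p^'n \<Rightarrow> real^'n \<Rightarrow> real^'n \<Rightarrow> ('n::finite, 'm) countsketch_seed \<Rightarrow> real"
  where "sketch_distortion \<epsilon> W U r1 r2 \<omega> =
    (norm (transpose W ** countsketch_collision \<omega> ** W)^2
      + norm (transpose W ** countsketch_collision \<omega> ** U)^2) / \<epsilon>^2
    + CARD('p) * (norm (transpose W *v (countsketch_collision \<omega> *v r1))^2
      + norm (transpose U *v (countsketch_collision \<omega> *v r2))^2) / (\<epsilon>^2 * (norm r1^2 + norm r2^2))"

lemma sum_sketch_distortion_le:
  fixes W :: "real^'q::finite^'n::finite" and U :: "real^'p::finite^'n"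
  assumes WW: "transpose W ** W = mat 1" and UU: "transpose U ** U = mat 1"
    and pq: "CARD('p) \<le> CARD('q)"
  shows "(\<Sum>\<omega> \<in> (UNIV :: ('n, 'm::finite) countsketch_seed set). sketch_distortion \<epsilon> W U r1 r2 \<omega>)
    \<le> 2 * (CARD(('n, 'm) countsketch_seed) / CARD('m))
      * (real CARD('q)^2 + 2 * real CARD('p) * real CARD('q)) / \<epsilon>^2"
proof -
  let ?\<Omega> = "UNIV :: ('n, 'm) countsketch_seed set"
  define \<nu> where "\<nu> = CARD(('n, 'm) countsketch_seed) / CARD('m)"
  define p where "p = real CARD('p)"
  define q where "q = real CARD('q)"
  define \<rho> where "\<rho> = norm r1^2 + norm r2^2"
  have "0 \<le> \<nu>" "0 \<le> p" "p \<le> q"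
    using pq by (simp_all add: \<nu>_def p_def q_def)
  have "(\<Sum>\<omega>\<in>?\<Omega>. sketch_distortion \<epsilon> W U r1 r2 \<omega>)
      = (\<Sum>\<omega>\<in>?\<Omega>. norm (transpose W ** countsketch_collision \<omega> ** W)^2
          + norm (transpose W ** countsketch_collision \<omega> ** U)^2) / \<epsilon>^2
        + p * (\<Sum>\<omega>\<in>?\<Omega>. norm (transpose W *v (countsketch_collision \<omega> *v r1))^2
          + norm (transpose U *v (countsketch_collision \<omega> *v r2))^2) / (\<epsilon>^2 * \<rho>)"
    by (simp only: sketch_distortion_def sum.distrib sum_divide_distrib[symmetric]
        sum_distrib_left[symmetric] p_def \<rho>_def)
  also have "\<dots> \<le> 2 * \<nu> * (q * q + q * p) / \<epsilon>^2 + p * (2 * \<nu> * q * \<rho>) / (\<epsilon>^2 * \<rho>)"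
    using sum_norm_sq_collision_orthonormal_le[OF WW UU, where 'm = 'm]
      sum_norm_sq_collision_residual_le[OF WW UU pq, where 'm = 'm, of r1 r2] \<open>0 \<le> p\<close>
    unfolding \<nu>_def p_def q_def \<rho>_def
    by (intro add_mono divide_right_mono mult_left_mono) simp_all
  also have "\<dots> \<le> 2 * \<nu> * (q * q + q * p) / \<epsilon>^2 + 2 * \<nu> * p * q / \<epsilon>^2"
  proof -
    have "p * (2 * \<nu> * q * \<rho>) / (\<epsilon>^2 * \<rho>) \<le> 2 * \<nu> * p * q / \<epsilon>^2"
      using \<open>0 \<le> \<nu>\<close> \<open>0 \<le> p\<close> \<open>p \<le> q\<close> by (cases "\<rho> = 0") (simp_all add: field_simps)
    then show ?thesis
      by simp
  qed
  also have "\<dots> = 2 * \<nu> * (q^2 + 2 * p * q) / \<epsilon>^2"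
    by (simp add: add_divide_distrib[symmetric] power2_eq_square algebra_simps)
  finally show ?thesis
    by (simp add: \<nu>_def p_def q_def)
qed

lemma add_le_three_if_sum_sq_le_four:
  fixes a b r :: real
  assumes "a^2 + b^2 \<le> 4 * r^2" and "0 \<le> r"
  shows "a + b \<le> 3 * r"
proof -
  have "(a + b)^2 \<le> 2 * (a^2 + b^2)"
    using sum_squares_bound[of a b] by (simp add: power2_sum)
  also have "\<dots> \<le> 9 * r^2"
    using assms(1) by (smt (verit) zero_le_power2)
  also have "\<dots> = (3 * r)^2"
    by (simp add: power_mult_distrib)
  finally show ?thesis
    using assms(2) power2_le_iff_abs_le[of "3 * r" "a + b"] by simp
qed

lemma sketch_distortion_less_imp:
  fixes W :: "real^'q^'n" and U :: "real^'p^'n"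
  assumes less: "sketch_distortion \<epsilon> W U r1 r2 \<omega> < 4" and e0: "0 < \<epsilon>"
  shows "norm (transpose W ** countsketch_collision \<omega> ** W) \<le> 2 * \<epsilon>"
    and "norm (transpose W ** countsketch_collision \<omega> ** U) \<le> 2 * \<epsilon>"
    and "norm (transpose W *v (countsketch_collision \<omega> *v r1))
        + norm (transpose U *v (countsketch_collision \<omega> *v r2))
      \<le> 3 * \<epsilon> * sqrt (norm r1^2 + norm r2^2) / sqrt CARD('p)"
proof -
  define Q1 where "Q1 = norm (transpose W ** countsketch_collision \<omega> ** W)"
  define Q2 where "Q2 = norm (transpose W ** countsketch_collision \<omega> ** U)"
  define Q3 where "Q3 = norm (transpose W *v (countsketch_collision \<omega> *v r1))"
  define Q5 where "Q5 = norm (transpose U *v (countsketch_collision \<omega> *v r2))"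
  define \<rho> where "\<rho> = norm r1^2 + norm r2^2"
  define p where "p = real CARD('p)"
  have p0: "0 < p" and \<rho>0: "0 \<le> \<rho>"
    by (simp_all add: p_def \<rho>_def)
  have split: "sketch_distortion \<epsilon> W U r1 r2 \<omega>
      = (Q1^2 + Q2^2) / \<epsilon>^2 + p * (Q3^2 + Q5^2) / (\<epsilon>^2 * \<rho>)"
    by (simp add: sketch_distortion_def Q1_def Q2_def Q3_def Q5_def \<rho>_def p_def)
  have nonneg: "0 \<le> (Q1^2 + Q2^2) / \<epsilon>^2" "0 \<le> p * (Q3^2 + Q5^2) / (\<epsilon>^2 * \<rho>)"
    using p0 \<rho>0 by simp_all
  have "(Q1^2 + Q2^2) / \<epsilon>^2 < 4"
    using less nonneg unfolding split by linarith
  then have "Q1^2 + Q2^2 < (2 * \<epsilon>)^2"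
    using e0 by (simp add: pos_divide_less_eq power_mult_distrib)
  moreover have "0 \<le> Q1^2" "0 \<le> Q2^2"
    by simp_all
  ultimately have "Q1^2 \<le> (2 * \<epsilon>)^2" "Q2^2 \<le> (2 * \<epsilon>)^2"
    by linarith+
  then show "Q1 \<le> 2 * \<epsilon>" "Q2 \<le> 2 * \<epsilon>"
    unfolding Q1_def Q2_def using e0 by (auto intro: power2_le_imp_le)
  have "Q3^2 + Q5^2 \<le> 4 * (\<epsilon> * sqrt \<rho> / sqrt p)^2"
  proof (cases "\<rho> = 0")
    case True
    then show ?thesis
      by (simp add: \<rho>_def Q3_def Q5_def add_nonneg_eq_0_iff)
  next
    case False
    have "p * (Q3^2 + Q5^2) / (\<epsilon>^2 * \<rho>) < 4"
      using less nonneg unfolding split by linarith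
    then have "p * (Q3^2 + Q5^2) < 4 * (\<epsilon>^2 * \<rho>)"
      using e0 False \<rho>0 by (simp add: pos_divide_less_eq)
    then show ?thesis
      using p0 \<rho>0 by (simp add: power_divide power_mult_distrib pos_le_divide_eq mult.commute)
  qed
  then have "Q3 + Q5 \<le> 3 * (\<epsilon> * sqrt \<rho> / sqrt p)"
    by (rule add_le_three_if_sum_sq_le_four) (use e0 \<rho>0 p0 in simp)
  then show "Q3 + Q5 \<le> 3 * \<epsilon> * sqrt \<rho> / sqrt p"
    by simp
qed

lemma countsketch_size_bound:
  fixes \<epsilon> \<delta> :: real
  assumes e0: "0 < \<epsilon>" and d0: "0 < \<delta>"
    and m: "real CARD('m::finite) \<ge>
      max (real (CARD('q::finite) * (CARD('q) + 1))) (real (2 * CARD('p::finite) * CARD('q)))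
        / (\<epsilon>^2 * \<delta>)"
  shows "2 * (CARD(('n::finite, 'm) countsketch_seed) / CARD('m))
      * (real CARD('q)^2 + 2 * real CARD('p) * real CARD('q)) / \<epsilon>^2
    \<le> 4 * \<delta> * CARD(('n, 'm) countsketch_seed)"
proof -
  define N where "N = real CARD(('n, 'm) countsketch_seed)"
  define p where "p = real CARD('p)"
  define q where "q = real CARD('q)"
  have "q^2 \<le> q * (q + 1)"
    by (simp add: q_def power2_eq_square algebra_simps)
  then have "q^2 + 2 * p * q \<le> 2 * max (q * (q + 1)) (2 * p * q)"
    using max.cobounded1[of "q * (q + 1)" "2 * p * q"] max.cobounded2[of "2 * p * q" "q * (q + 1)"]
    by linarith
  also have "\<dots> \<le> 2 * (CARD('m) * (\<epsilon>^2 * \<delta>))"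
    using m e0 d0 by (simp add: p_def q_def pos_divide_le_eq algebra_simps)
  finally have "2 * (N / CARD('m)) * (q^2 + 2 * p * q) / \<epsilon>^2
      \<le> 2 * (N / CARD('m)) * (2 * (CARD('m) * (\<epsilon>^2 * \<delta>))) / \<epsilon>^2"
    by (intro divide_right_mono mult_left_mono) (simp_all add: N_def)
  also have "\<dots> = 4 * \<delta> * N"
    using e0 by (simp add: field_simps)
  finally show ?thesis
    by (simp add: N_def p_def q_def)
qed

lemma prob_countsketch_ge:
  fixes G :: "('n::finite, 'm::finite) countsketch_seed set" and \<delta> :: real
  assumes "(1 - \<delta>) * CARD(('n, 'm) countsketch_seed) \<le> card G" and "\<And>\<omega>. \<omega> \<in> G \<Longrightarrow> P \<omega>"
  shows "measure_pmf.prob (countsketch_pmf :: ('n, 'm) countsketch_seed pmf) {\<omega>. P \<omega>} \<ge> 1 - \<delta>"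
proof -
  have "card G \<le> card {\<omega>. P \<omega>}"
    using assms(2) by (intro card_mono) auto
  with assms(1) have "(1 - \<delta>) * CARD(('n, 'm) countsketch_seed) \<le> card {\<omega>. P \<omega>}"
    by linarith
  then show ?thesis
    by (simp add: countsketch_pmf_def measure_pmf_of_set pos_le_divide_eq)
qed

locale tsls_svd =
  fixes y :: "real^'n::finite" and X :: "real^'p::finite^'n" and Z :: "real^'q::finite^'n"
    and UX :: "real^'p^'n" and SX VX :: "real^'p^'p"
    and UZ :: "real^'q^'n" and SZ VZ :: "real^'q^'q"
  assumes gram_Z_invertible: "invertible (transpose Z ** Z)"
    and gram_X_invertible: "invertible (transpose X ** proj Z ** X)"
    and svd_X: "thin_svd X UX SX VX" and svd_Z: "thin_svd Z UZ SZ VZ"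
begin

definition residual :: "real^'n" where
  "residual = y - X *v tsls y X Z"

definition residual_in_span_Z :: "real^'n" where
  "residual_in_span_Z = UZ *v (transpose UZ *v residual)"

lemma X_injective: "\<forall>v. X *v v = 0 \<longrightarrow> v = 0"
  using gram_X_invertible unfolding invertible_iff_ker_zero
  by (metis matrix_vector_mul_assoc matrix_vector_mult_0_right)

lemma Z_injective: "\<forall>v. Z *v v = 0 \<longrightarrow> v = 0"
  using invertible_gram_imp_ker_zero[OF gram_Z_invertible] by blast

lemma sigma_min_X_pos: "0 < sigma_min X"
  using X_injective by (intro sigma_min_pos) blast

lemmas X_factor = thin_svd_factor[OF svd_X X_injective]
  and Z_factor = thin_svd_factor[OF svd_Z Z_injective]

lemma proj_Z: "proj Z = UZ ** transpose UZ"
proof -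
  have "invertible (transpose UZ ** UZ)"
    by (simp add: Z_factor(1) invertible_def)
  then have "proj (UZ ** (SZ ** transpose VZ)) = proj UZ"
    by (rule proj_mult_invertible[OF _ Z_factor(3)])
  then show ?thesis
    using Z_factor(2) proj_orthonormal[OF Z_factor(1)] by simp
qed

lemma normal_equation: "transpose UX *v residual_in_span_Z = 0"
  unfolding residual_in_span_Z_def residual_def
  by (rule tsls_normal_equation[OF X_factor(2,3) proj_Z gram_X_invertible])

lemma norm_sq_residual_split:
  "norm (residual - residual_in_span_Z)^2 + norm residual_in_span_Z^2 = norm residual^2"
proof -
  have "inner residual_in_span_Z (residual - residual_in_span_Z) = 0"
    by (simp add: residual_in_span_Z_def inner_diff_right inner_matrix_vector_mult
        matrix_vector_mul_assoc Z_factor(1))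
  then show ?thesis
    using norm_add_scaleR_sq[of "residual - residual_in_span_Z" 1 residual_in_span_Z] by simp
qed

lemma alignment_bounds:
  assumes e0: "0 < \<epsilon>" and e3: "\<epsilon> \<le> 1/3"
    and align: "(sigma_min (transpose UZ ** UX))^2 \<ge> 16 * \<epsilon> * (1 + \<epsilon>) / (1 - \<epsilon>)"
  shows "16 * \<epsilon> \<le> (sigma_min (transpose UZ ** UX))^2"
    and "0 < sigma_min (transpose UZ ** UX)" and "sigma_min (transpose UZ ** UX) \<le> 1"
proof -
  have "16 * \<epsilon> * 1 \<le> 16 * \<epsilon> * ((1 + \<epsilon>) / (1 - \<epsilon>))"
    using e0 e3 by (intro mult_left_mono) simp_all
  with align show es: "16 * \<epsilon> \<le> (sigma_min (transpose UZ ** UX))^2"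
    by simp
  show "0 < sigma_min (transpose UZ ** UX)"
    using es e0 sigma_min_nonneg[of "transpose UZ ** UX"] by (auto simp: order_le_less)
  show "sigma_min (transpose UZ ** UX) \<le> 1"
    by (rule sigma_min_orthonormal_product_le_1[OF Z_factor(1) X_factor(1)])
qed

(* The argument yields 12 eps norm residual / (sqrt p sigma_min X s^2); the stated bound is
   weaker. *)
lemma sketched_tsls_if_small_distortion:
  fixes \<omega> :: "('n, 'm::finite) countsketch_seed"
  assumes e0: "0 < \<epsilon>" and e3: "\<epsilon> \<le> 1/3"
    and align: "(sigma_min (transpose UZ ** UX))^2 \<ge> 16 * \<epsilon> * (1 + \<epsilon>) / (1 - \<epsilon>)"
    and small: "sketch_distortion \<epsilon> UZ UX (residual - residual_in_span_Z) residual_in_span_Z \<omega> < 4"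
  defines "S \<equiv> countsketch_matrix \<omega>"
  shows "invertible (transpose (S ** Z) ** (S ** Z)) \<and>
    invertible (transpose (S ** X) ** proj (S ** Z) ** (S ** X)) \<and>
    norm (tsls (S *v y) (S ** X) (S ** Z) - tsls y X Z)
      \<le> 4 * \<epsilon> / (1 - \<epsilon>) * (2 + 3 * norm residual / sqrt (real CARD('p)))
        * (1 / (sigma_min X * (sigma_min (transpose UZ ** UX))^2))"
proof -
  define s where "s = sigma_min (transpose UZ ** UX)"
  define c where "c = 1 / (sigma_min X * s^2)"
  note s = alignment_bounds[OF e0 e3 align, folded s_def]
  have c0: "0 < c"
    using s(2) sigma_min_X_pos by (simp add: c_def)
  note distortion = sketch_distortion_less_imp[OF small e0]
  have Q: "norm (transpose UZ *v (countsketch_collision \<omega> *v (residual - residual_in_span_Z)))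
      + norm (transpose UX *v (countsketch_collision \<omega> *v residual_in_span_Z))
      \<le> 3 * \<epsilon> * norm residual / sqrt CARD('p)"
    using distortion(3) by (simp add: norm_sq_residual_split)
  note bound = sketched_tsls_error_bound[where P = S and E = "countsketch_collision \<omega>"
      and b = "tsls y X Z" and \<sigma> = "sigma_min X",
      OF X_factor(2) Z_factor(2) X_factor(3) Z_factor(3) X_factor(1) Z_factor(1)
      countsketch_gram[of \<omega>, folded S_def]
      normal_equation[unfolded residual_in_span_Z_def residual_def] e0 s(1) s(2) s(3)
      sigma_min_mult_norm_le[of "transpose UZ ** UX", folded s_def] sigma_min_X_pos
      sigma_min_mult_norm_le[of X] distortion(1,2),
      folded residual_def residual_in_span_Z_def]
  have "norm (tsls (S *v y) (S ** X) (S ** Z) - tsls y X Z)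
      \<le> 4 / (sigma_min X * s^2)
        * (norm (transpose UZ *v (countsketch_collision \<omega> *v (residual - residual_in_span_Z)))
          + norm (transpose UX *v (countsketch_collision \<omega> *v residual_in_span_Z)))"
    using bound by blast
  also have "\<dots> \<le> 4 / (sigma_min X * s^2) * (3 * \<epsilon> * norm residual / sqrt CARD('p))"
    by (rule mult_left_mono[OF Q]) (simp add: sigma_min_nonneg)
  also have "\<dots> = (4 * \<epsilon>) * (3 * norm residual / sqrt CARD('p)) * c"
    by (simp add: c_def)
  also have "\<dots> \<le> 4 * \<epsilon> / (1 - \<epsilon>) * (2 + 3 * norm residual / sqrt CARD('p)) * c"
    using e0 e3 c0 by (intro mult_right_mono mult_mono) (simp_all add: field_simps)
  finally show ?thesis
    using bound by (simp add: c_def s_def)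
qed

lemma card_small_distortion_ge:
  assumes e0: "0 < \<epsilon>" and e3: "\<epsilon> \<le> 1/3" and d0: "0 < \<delta>"
    and align: "(sigma_min (transpose UZ ** UX))^2 \<ge> 16 * \<epsilon> * (1 + \<epsilon>) / (1 - \<epsilon>)"
    and m: "real CARD('m::finite) \<ge>
      max (real (CARD('q) * (CARD('q) + 1))) (real (2 * CARD('p) * CARD('q))) / (\<epsilon>^2 * \<delta>)"
  shows "(1 - \<delta>) * CARD(('n, 'm) countsketch_seed)
    \<le> card {\<omega> :: ('n, 'm) countsketch_seed.
        sketch_distortion \<epsilon> UZ UX (residual - residual_in_span_Z) residual_in_span_Z \<omega> < 4}"
proof -
  let ?f = "sketch_distortion \<epsilon> UZ UX (residual - residual_in_span_Z) residual_in_span_Z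
    :: ('n, 'm) countsketch_seed \<Rightarrow> real"
  define N where "N = real CARD(('n, 'm) countsketch_seed)"
  have "\<And>x. (transpose UZ ** UX) *v x = 0 \<Longrightarrow> x = 0"
    using sigma_min_mult_norm_le[of "transpose UZ ** UX"] alignment_bounds(2)[OF e0 e3 align]
    by (metis mult_le_0_iff norm_le_zero_iff norm_zero not_le)
  then have pq: "CARD('p) \<le> CARD('q)"
    by (rule card_le_if_matrix_injective)
  have sum_le: "(\<Sum>\<omega>\<in>UNIV. ?f \<omega>) \<le> 4 * \<delta> * N"
    using sum_sketch_distortion_le[OF Z_factor(1) X_factor(1) pq, where 'm = 'm,
        of \<epsilon> "residual - residual_in_span_Z" residual_in_span_Z]
      countsketch_size_bound[OF e0 d0 m, where 'n = 'n]
    unfolding N_def by linarith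
  have "0 \<le> ?f \<omega>" for \<omega>
    by (simp add: sketch_distortion_def)
  then have "N - (\<Sum>\<omega>\<in>UNIV. ?f \<omega>) / 4 \<le> card {\<omega>. ?f \<omega> < 4}"
    unfolding N_def by (rule markov_card_less) simp
  with sum_le show ?thesis
    unfolding N_def by (simp add: algebra_simps)
qed

end

theorem theoremB1:
  fixes y :: "real^'n::finite" and X :: "real^'p::finite^'n" and Z :: "real^'q::finite^'n"
    and UX :: "real^'p^'n" and SX VX :: "real^'p^'p"
    and UZ :: "real^'q^'n" and SZ VZ :: "real^'q^'q"
    and \<delta> \<epsilon> :: real
  assumes "invertible (transpose Z ** Z)"
    and "invertible (transpose X ** proj Z ** X)"
    and "thin_svd X UX SX VX" and "thin_svd Z UZ SZ VZ"
    and "0 < \<delta>" "\<delta> < 1" "0 < \<epsilon>" "\<epsilon> \<le> 1/3"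
    and "real CARD('m::finite) \<ge>
           max (real (CARD('q) * (CARD('q) + 1))) (real (2 * CARD('p) * CARD('q))) / (\<epsilon>^2 * \<delta>)"
    and "(sigma_min (transpose UZ ** UX))^2 \<ge> 16 * \<epsilon> * (1 + \<epsilon>) / (1 - \<epsilon>)"
  shows "measure_pmf.prob (countsketch_pmf :: ('n \<Rightarrow> 'm \<times> bool) pmf)
     {\<omega>. let S = countsketch_matrix \<omega>;
           Xt = S ** X; Zt = S ** Z; yt = S *v y;
           e = y - X *v tsls y X Z;
           \<sigma>s = 1 / (sigma_min X * (sigma_min (transpose UZ ** UX))^2)
       in invertible (transpose Zt ** Zt) \<and> invertible (transpose Xt ** proj Zt ** Xt) \<and>
          norm (tsls yt Xt Zt - tsls y X Z)
            \<le> 4 * \<epsilon> / (1 - \<epsilon>) * (2 + 3 * norm e / sqrt (real CARD('p))) * \<sigma>s}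
     \<ge> 1 - \<delta>"
proof -
  interpret tsls_svd y X Z UX SX VX UZ SZ VZ
    using assms(1-4) by unfold_locales
  note good = card_small_distortion_ge[OF assms(7,8,5,10,9), unfolded residual_def]
  note accurate = sketched_tsls_if_small_distortion[OF assms(7,8,10), unfolded residual_def]
  show ?thesis
    unfolding Let_def by (rule prob_countsketch_ge[OF good], rule accurate, simp)
qed

end
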